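(* Let $G$ be a finite abelian group with $|G|>1$, let $p(G)$ be the smallest prime dividing $|G|$, and let $S\subset G$ with $|S|\leqslant\log_2p(G)$. Then one can assign to each non-empty subset $X\subseteq S$ an element $s_X\in X$ with the following property. For all non-empty $X,Y\subseteq S$, the only solution of $x+y=s_X+s_Y$ with $x\in X$ and $y\in Y$ is $(x,y)=(s_X,s_Y)$. *)

theory Defs
  imports Complex_Main "HOL-Computational_Algebra.Primes"
begin

definition smallest_prime_factor :: "nat \<Rightarrow> nat" where
  "smallest_prime_factor n = (LEAST p. prime p \<and> p dvd n)"

end

theory Submission
  imports Defs "HOL-Analysis.Analysis" "HOL-Algebra.Multiplicative_Group"
begin

text \<open>Let \<open>R \<subseteq> \<real>\<^sup>G\<close> consist of the vectors \<open>e\<^sub>a + e\<^sub>b - e\<^sub>c - e\<^sub>d\<close> with \<open>a, b, c, d \<in> S\<close>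
  and \<open>a + b = c + d\<close>. Suppose \<open>e\<^sub>a - e\<^sub>c \<in> span R\<close> for some \<open>a \<noteq> c\<close> in \<open>S\<close>. Completing a basis
  \<open>B\<close> of \<open>span R\<close>, which has at most \<open>|S| - 1\<close> elements, by unit vectors to a nonsingular
  matrix, Cramer's rule writes \<open>D (e\<^sub>a - e\<^sub>c)\<close> as an integer combination of \<open>B\<close>, where \<open>D \<noteq> 0\<close> is
  the determinant. Every vector of \<open>R\<close> is the sum of two rows of a transposed incidence matrix of
  a directed graph, and such matrices are totally unimodular, so \<open>|D| \<le> 2^(|S| - 1) < p(G)\<close>.
  The homomorphism \<open>\<int>\<^sup>G \<rightarrow> G\<close>, \<open>e\<^sub>g \<mapsto> g\<close>, kills \<open>R\<close> and hence gives \<open>D (a - c) = 0\<close>, which is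
  impossible because \<open>G\<close> has no nonzero element of order less than \<open>p(G)\<close>.

  So a generic linear functional vanishing on \<open>R\<close> is injective on \<open>S\<close>: an injective Freiman
  homomorphism \<open>\<phi> : S \<rightarrow> \<real>\<close>. Take \<open>s\<^sub>X\<close> to be the maximiser of \<open>\<phi>\<close> on \<open>X\<close>; then
  \<open>x + y = s\<^sub>X + s\<^sub>Y\<close> gives \<open>\<phi> x + \<phi> y = \<phi> s\<^sub>X + \<phi> s\<^sub>Y\<close>, which forces \<open>x = s\<^sub>X\<close> and \<open>y = s\<^sub>Y\<close>.\<close>

section \<open>Integer multiples and integer vectors\<close>

definition additive_group :: "'a::ab_group_add monoid" where
  "additive_group = \<lparr>carrier = UNIV, monoid.mult = (+), one = 0\<rparr>"

interpretation additive_group: comm_group "additive_group :: 'a::ab_group_add monoid"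
  unfolding additive_group_def
  by (rule comm_groupI) (auto simp: add.assoc add.commute intro: exI[of _ "- _"])

definition scaleZ :: "int \<Rightarrow> 'a::ab_group_add \<Rightarrow> 'a" where
  "scaleZ n x = x [^]\<^bsub>additive_group\<^esub> n"

lemma scaleZ_add_left: "scaleZ (m + n) x = scaleZ m x + scaleZ n x"
  using additive_group.int_pow_mult[of x m n] by (simp add: scaleZ_def additive_group_def)

lemma scaleZ_scaleZ: "scaleZ m (scaleZ n x) = scaleZ (n * m) x"
  using additive_group.int_pow_pow[of x n m] by (simp add: scaleZ_def additive_group_def)

lemma scaleZ_add_right: "scaleZ n (x + y) = scaleZ n x + scaleZ n y"
  using additive_group.int_pow_distrib[of x y n] by (simp add: scaleZ_def additive_group_def)

lemma scaleZ_0_left [simp]: "scaleZ 0 x = 0"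
  by (simp add: scaleZ_def additive_group_def)

lemma scaleZ_0_right [simp]: "scaleZ n 0 = 0"
  using additive_group.int_pow_one[of n] by (simp add: scaleZ_def additive_group_def)

lemma scaleZ_1 [simp]: "scaleZ 1 x = x"
  using additive_group.int_pow_1[of x] by (simp add: scaleZ_def additive_group_def)

lemma scaleZ_sum_right: "scaleZ n (\<Sum>i\<in>I. f i) = (\<Sum>i\<in>I. scaleZ n (f i))"
  by (induction I rule: infinite_finite_induct) (simp_all add: scaleZ_add_right)

lemma scaleZ_eq_0_imp_eq_0:
  fixes x :: "'a::{finite, ab_group_add}"
  assumes "n \<noteq> 0" "\<bar>n\<bar> < int (smallest_prime_factor CARD('a))" "scaleZ n x = 0"
  shows "x = 0"
proof -
  let ?d = "additive_group.ord x"
  have d_dvd_n: "int ?d dvd n"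
    using assms(3) additive_group.int_pow_eq_id[of x n] by (simp add: scaleZ_def additive_group_def)
  have d_dvd_card: "?d dvd CARD('a)"
    using additive_group.ord_dvd_group_order[of x]
    by (simp add: additive_group_def order_def)
  have "?d = 1"
  proof (rule ccontr)
    assume "?d \<noteq> 1"
    then obtain q where q: "prime q" "q dvd ?d" using prime_factor_nat by blast
    have "smallest_prime_factor CARD('a) \<le> q"
      unfolding smallest_prime_factor_def
      by (rule Least_le) (use q d_dvd_card dvd_trans in blast)
    moreover have "int q dvd n" using q(2) d_dvd_n by (meson dvd_trans of_nat_dvd_iff)
    then have "int q \<le> \<bar>n\<bar>" using dvd_imp_le_int[OF assms(1)] by fastforce
    ultimately show False using assms(2) by linarith
  qed
  then show ?thesis
    using additive_group.ord_eq_1[of x] by (simp add: additive_group_def)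
qed

definition int_vector :: "real^'n \<Rightarrow> bool" where
  "int_vector v \<longleftrightarrow> (\<forall>i. v$i \<in> \<int>)"

lemma int_vector_axis: "int_vector (axis i 1)"
  by (simp add: int_vector_def axis_def)

lemma int_vector_add: "int_vector v \<Longrightarrow> int_vector w \<Longrightarrow> int_vector (v + w)"
  and int_vector_diff: "int_vector v \<Longrightarrow> int_vector w \<Longrightarrow> int_vector (v - w)"
  and int_vector_scaleR: "c \<in> \<int> \<Longrightarrow> int_vector v \<Longrightarrow> int_vector (c *\<^sub>R v)"
  by (simp_all add: int_vector_def)

text \<open>On integer vectors this is the homomorphism \<open>\<int>\<^sup>G \<rightarrow> G\<close> sending the unit vector
  \<open>e\<^sub>g\<close> to \<open>g\<close>; the floor only makes it total.\<close>
definition weighted_sum :: "real^('a::{finite, ab_group_add}) \<Rightarrow> 'a" where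
  "weighted_sum v = (\<Sum>g\<in>UNIV. scaleZ \<lfloor>v$g\<rfloor> g)"

lemma weighted_sum_axis: "weighted_sum (axis g 1) = g"
proof -
  have "weighted_sum (axis g 1) = (\<Sum>h\<in>UNIV. if h = g then h else 0)"
    unfolding weighted_sum_def by (intro sum.cong) (auto simp: axis_def)
  then show ?thesis by simp
qed

lemma weighted_sum_add:
  "int_vector v \<Longrightarrow> weighted_sum (v + w) = weighted_sum v + weighted_sum w"
  unfolding weighted_sum_def int_vector_def
  by (auto simp: sum.distrib scaleZ_add_left elim!: Ints_cases intro!: sum.cong)

lemma weighted_sum_diff:
  "int_vector v \<Longrightarrow> int_vector w \<Longrightarrow> weighted_sum (v - w) = weighted_sum v - weighted_sum w"
  using weighted_sum_add[of "v - w" w] int_vector_diff[of v w] by simp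

lemma weighted_sum_scaleR:
  assumes "int_vector v"
  shows "weighted_sum (of_int n *\<^sub>R v) = scaleZ n (weighted_sum v)"
proof -
  have "\<lfloor>of_int n * v$g\<rfloor> = \<lfloor>v$g\<rfloor> * n" for g
    using assms unfolding int_vector_def by (metis Ints_cases floor_of_int mult.commute of_int_mult)
  then show ?thesis by (simp add: weighted_sum_def scaleZ_sum_right scaleZ_scaleZ)
qed

lemma weighted_sum_sum:
  assumes "\<And>v. v \<in> B \<Longrightarrow> int_vector (f v)"
  shows "weighted_sum (\<Sum>v\<in>B. f v) = (\<Sum>v\<in>B. weighted_sum (f v))"
  using assms
proof (induction B rule: infinite_finite_induct)
  case (insert v B)
  then show ?case by (simp add: weighted_sum_add)
qed (simp_all add: weighted_sum_def)

section \<open>Determinants of matrices with arc rows\<close>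

text \<open>The rows of the transposed incidence matrix of a directed graph, with possibly missing endpoints.\<close>
definition arc_vector :: "real^'n \<Rightarrow> bool" where
  "arc_vector v \<longleftrightarrow> (\<forall>j. v$j = -1 \<or> v$j = 0 \<or> v$j = 1)
     \<and> (\<forall>j k. v$j = 1 \<longrightarrow> v$k = 1 \<longrightarrow> j = k) \<and> (\<forall>j k. v$j = -1 \<longrightarrow> v$k = -1 \<longrightarrow> j = k)"

lemma arc_vector_axis: "arc_vector (axis i 1)"
  and arc_vector_axis_diff: "arc_vector (axis i 1 - axis j 1)"
  by (auto simp: arc_vector_def axis_def)

lemma int_vector_if_arc_vector: "arc_vector v \<Longrightarrow> int_vector v"
  unfolding arc_vector_def int_vector_def by (metis Ints_0 Ints_1 Ints_minus)

lemma abs_arc_vector_le_1: "arc_vector v \<Longrightarrow> \<bar>v$j\<bar> \<le> 1"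
  unfolding arc_vector_def by (metis abs_0 abs_1 abs_minus order_refl zero_le_one)

lemma arc_vector_two_nonzero:
  assumes "arc_vector v" "j \<noteq> k" "v$j \<noteq> 0" "v$k \<noteq> 0"
  shows "v$j + v$k = 0" "\<And>l. l \<noteq> j \<Longrightarrow> l \<noteq> k \<Longrightarrow> v$l = 0"
  using assms unfolding arc_vector_def by (smt (verit))+

lemma abs_det_le_1_if_rows_sparse:
  fixes A :: "real^'n^'n"
  assumes sparse: "\<And>i j k. A$i$j \<noteq> 0 \<Longrightarrow> A$i$k \<noteq> 0 \<Longrightarrow> j = k"
    and bounded: "\<And>i j. \<bar>A$i$j\<bar> \<le> 1"
  shows "\<bar>det A\<bar> \<le> 1"
proof -
  let ?P = "{p. p permutes (UNIV::'n set)}"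
  let ?term = "\<lambda>p. of_int (sign p) * (\<Prod>i\<in>UNIV. A$i$p i) :: real"
  define Q where "Q = {p\<in>?P. (\<Prod>i\<in>UNIV. A$i$p i) \<noteq> 0}"
  have "finite ?P" by (simp add: finite_permutations)
  then have "det A = sum ?term Q"
    unfolding det_def Q_def by (intro sum.mono_neutral_right) auto
  have "Q \<subseteq> ?P" by (auto simp: Q_def)
  have "\<forall>p\<in>Q. \<forall>q\<in>Q. p = q"
    unfolding Q_def by (auto intro: sparse)
  then have "card Q \<le> 1"
    using card_le_Suc0_iff_eq[OF finite_subset[OF \<open>Q \<subseteq> ?P\<close> \<open>finite ?P\<close>]] by simp
  have "\<bar>sum ?term Q\<bar> \<le> (\<Sum>p\<in>Q. \<bar>?term p\<bar>)" by (rule sum_abs)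
  also have "\<dots> \<le> (\<Sum>p\<in>Q. 1)"
  proof (rule sum_mono)
    fix p
    have "(\<Prod>i\<in>UNIV. \<bar>A$i$p i\<bar>) \<le> 1" by (rule prod_le_1) (auto simp: bounded)
    then show "\<bar>?term p\<bar> \<le> 1" by (simp add: abs_mult sign_def abs_prod)
  qed
  also have "\<dots> \<le> 1" using \<open>card Q \<le> 1\<close> by simp
  finally show ?thesis using \<open>det A = sum ?term Q\<close> by simp
qed

lemma det_clear_entry:
  fixes A :: "'a::field^'n^'n"
  assumes "i \<noteq> k" "A$i$j \<noteq> 0" "\<And>l. l \<noteq> j \<Longrightarrow> A$i$l = 0"
  shows "det (\<chi> r l. if r = k \<and> l = j then 0 else A$r$l) = det A"
proof -
  let ?c = "- A$k$j / A$i$j"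
  have "(\<chi> r l. if r = k \<and> l = j then 0 else A$r$l) =
        (\<chi> r. if r = k then row k A + ?c *s row i A else row r A)"
    using assms by (auto simp: vec_eq_iff row_def)
  then show ?thesis using det_row_operation[OF assms(1)[symmetric]] by simp
qed

lemma arc_rows_mult_indicator_eq_0:
  fixes A :: "real^'n^'n"
  assumes arc: "\<And>i. arc_vector (A$i)"
    and closed: "\<And>i j. j \<in> C \<Longrightarrow> A$i$j \<noteq> 0 \<Longrightarrow> \<exists>l\<in>C. l \<noteq> j \<and> A$i$l \<noteq> 0"
  shows "A *v (\<chi> j. if j \<in> C then 1 else 0) = 0"
proof -
  have "(\<Sum>j\<in>C. A$i$j) = 0" for i
  proof (cases "\<exists>j\<in>C. A$i$j \<noteq> 0")
    case True
    then obtain j l where jl: "j \<in> C" "l \<in> C" "l \<noteq> j" "A$i$j \<noteq> 0" "A$i$l \<noteq> 0"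
      using closed by blast
    have "(\<Sum>j\<in>C. A$i$j) = (\<Sum>j\<in>{j, l}. A$i$j)"
      using arc_vector_two_nonzero(2)[OF arc jl(3)[symmetric] jl(4,5)] jl(1,2)
      by (intro sum.mono_neutral_right) auto
    also have "\<dots> = 0" using arc_vector_two_nonzero(1)[OF arc jl(3)[symmetric] jl(4,5)] jl(3) by simp
    finally show ?thesis .
  qed simp
  then show ?thesis
    by (simp add: vec_eq_iff matrix_vector_mult_def if_distrib sum.If_cases)
qed

lemma abs_det_le_1_if_arc_rows:
  fixes A :: "real^'n^'n"
  assumes "\<And>i. arc_vector (A$i)"
  shows "\<bar>det A\<bar> \<le> 1"
  using assms
proof (induction "card {(i, j). A$i$j \<noteq> 0}" arbitrary: A rule: less_induct)
  case (less A)
  txt \<open>A row whose only nonzero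
    entry lies in \<open>C\<close> allows a row operation clearing another entry of that column; if there is
    no such row, the indicator vector of \<open>C\<close> lies in the kernel of \<open>A\<close>.\<close>
  define C where "C = {j. \<exists>i l. l \<noteq> j \<and> A$i$j \<noteq> 0 \<and> A$i$l \<noteq> 0}"
  consider (sparse) "C = {}"
    | (leaf) i j where "j \<in> C" "A$i$j \<noteq> 0" "\<And>l. l \<noteq> j \<Longrightarrow> A$i$l = 0"
    | (no_leaf) "C \<noteq> {}" "\<And>i j. j \<in> C \<Longrightarrow> A$i$j \<noteq> 0 \<Longrightarrow> \<exists>l. l \<noteq> j \<and> A$i$l \<noteq> 0"
    by blast
  then show ?case
  proof cases
    case sparse
    then show ?thesis
      using abs_det_le_1_if_rows_sparse[of A] abs_arc_vector_le_1[OF less.prems] unfolding C_def by blast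
  next
    case leaf
    then obtain k l where kl: "l \<noteq> j" "A$k$j \<noteq> 0" "A$k$l \<noteq> 0" unfolding C_def by blast
    then have "i \<noteq> k" using leaf(3) by auto
    define A' where "A' = (\<chi> r l. if r = k \<and> l = j then 0 else A$r$l)"
    have "det A' = det A" unfolding A'_def by (rule det_clear_entry[OF \<open>i \<noteq> k\<close> leaf(2,3)])
    have "{(r, l). A'$r$l \<noteq> 0} \<subset> {(r, l). A$r$l \<noteq> 0}"
      using kl(2) by (auto simp: A'_def split: if_splits)
    then have "card {(r, l). A'$r$l \<noteq> 0} < card {(r, l). A$r$l \<noteq> 0}"
      by (intro psubset_card_mono) auto
    moreover have "arc_vector (A'$r)" for r
      using less.prems[of r] unfolding A'_def arc_vector_def by simp
    ultimately have "\<bar>det A'\<bar> \<le> 1" by (rule less.hyps)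
    with \<open>det A' = det A\<close> show ?thesis by simp
  next
    case no_leaf
    have "\<exists>l\<in>C. l \<noteq> j \<and> A$i$l \<noteq> 0" if j: "j \<in> C" "A$i$j \<noteq> 0" for i j
    proof -
      obtain l where "l \<noteq> j" "A$i$l \<noteq> 0" using no_leaf(2)[OF j] by blast
      moreover have "l \<in> C" unfolding C_def using calculation j(2) by auto
      ultimately show ?thesis by blast
    qed
    then have "A *v (\<chi> j. if j \<in> C then 1 else 0) = 0"
      by (intro arc_rows_mult_indicator_eq_0 less.prems)
    moreover have "(\<chi> j. if j \<in> C then 1 else 0) \<noteq> (0 :: real^'n)"
      using no_leaf(1) by (auto simp: vec_eq_iff)
    ultimately have "\<not> inj ((*v) A)" by (metis injD matrix_vector_mult_0_right)
    then have "det A = 0" using det_eq_0_rank less_rank_noninjective by blast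
    then show ?thesis by simp
  qed
qed

lemma abs_det_le_2_pow_if_rows_sum_of_arcs:
  fixes A :: "real^'n^'n"
  assumes "\<And>i. i \<in> I \<Longrightarrow> \<exists>u v. arc_vector u \<and> arc_vector v \<and> A$i = u + v"
    and "\<And>i. i \<notin> I \<Longrightarrow> arc_vector (A$i)"
  shows "\<bar>det A\<bar> \<le> 2 ^ card I"
  using finite[of I] assms
proof (induction I arbitrary: A rule: finite_induct)
  case empty
  then show ?case using abs_det_le_1_if_arc_rows[of A] by simp
next
  case (insert i I)
  obtain u v where uv: "arc_vector u" "arc_vector v" "A$i = u + v" using insert.prems(1) by blast
  let ?A\<^sub>u = "(\<chi> k. if k = i then u else A$k) :: real^'n^'n"
  let ?A\<^sub>v = "(\<chi> k. if k = i then v else A$k) :: real^'n^'n"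
  have "A = (\<chi> k. if k = i then u + v else A$k)" using uv(3) by (simp add: vec_eq_iff)
  then have split: "det A = det ?A\<^sub>u + det ?A\<^sub>v"
    using det_row_add[where a = "\<lambda>_. u" and b = "\<lambda>_. v" and c = "\<lambda>k. A$k" and k = i] by simp
  have sums: "\<exists>u v. arc_vector u \<and> arc_vector v \<and> A$k = u + v" if "k \<in> I" for k
    using insert.prems(1) that by blast
  have arcs: "arc_vector (A$k)" if "k \<notin> I" "k \<noteq> i" for k
    using insert.prems(2) that by blast
  have "\<bar>det ?A\<^sub>u\<bar> \<le> 2 ^ card I" "\<bar>det ?A\<^sub>v\<bar> \<le> 2 ^ card I"
    by (rule insert.IH; use insert.hyps(2) uv sums arcs in force)+
  then show ?case using split insert.hyps by simp
qed

lemma Ints_det: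
  fixes A :: "'a::comm_ring_1^'n^'n"
  assumes "\<And>i j. A$i$j \<in> \<int>"
  shows "det A \<in> \<int>"
  unfolding det_def using assms by (intro Ints_sum Ints_mult Ints_prod) auto

lemma Ints_det_mult_solution:
  fixes A :: "'a::field^'n^'n"
  assumes "\<And>i j. A$i$j \<in> \<int>" "\<And>i. (A *v x)$i \<in> \<int>"
  shows "det A * x$k \<in> \<int>"
proof -
  have "det (\<chi> i j. if j = k then (A *v x)$i else A$i$j) \<in> \<int>"
    using assms by (intro Ints_det) simp
  then show ?thesis using cramer_lemma[of k A x] by (simp add: mult.commute)
qed

lemma independent_extends_to_rows_of_nonsingular_matrix:
  fixes B :: "(real^'n) set"
  assumes "independent B"
  obtains A :: "real^'n^'n"
  where "det A \<noteq> 0" "inj (\<lambda>i. A$i)" "B \<subseteq> range (\<lambda>i. A$i)" "range (\<lambda>i. A$i) \<subseteq> B \<union> Basis"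
proof -
  obtain B' where B': "B \<subseteq> B'" "B' \<subseteq> B \<union> Basis" "independent B'" "B \<union> Basis \<subseteq> span B'"
    using maximal_independent_subset_extend[OF Un_upper1 assms] by blast
  have "UNIV \<subseteq> span B'"
    using span_minimal[of Basis "span B'"] B'(4) by (simp add: span_Basis)
  then have "card B' = CARD('n)"
    using basis_card_eq_dim[of B' UNIV] B'(3) by simp
  then obtain g where g: "bij_betw g (UNIV :: 'n set) B'"
    using finite_same_card_bij[OF finite_class.finite_UNIV finiteI_independent[OF B'(3)]] by auto
  define A :: "real^'n^'n" where "A = (\<chi> i. g i)"
  have A_rows: "(\<lambda>i. A$i) = g" by (simp add: A_def)
  have "rows A = range g"
    unfolding rows_def row_def A_def by (simp add: image_def)
  then have "rows A = B'"
    using bij_betw_imp_surj_on[OF g] by simp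
  then have "rank A = CARD('n)"
    using \<open>card B' = CARD('n)\<close> dim_eq_card_independent[OF B'(3)] by (simp add: row_rank_def)
  show ?thesis
  proof (rule that)
    show "det A \<noteq> 0" using \<open>rank A = CARD('n)\<close> by (simp add: det_eq_0_rank)
    show "inj (\<lambda>i. A$i)" unfolding A_rows by (rule bij_betw_imp_inj_on[OF g])
    show "B \<subseteq> range (\<lambda>i. A$i)" "range (\<lambda>i. A$i) \<subseteq> B \<union> Basis"
      unfolding A_rows bij_betw_imp_surj_on[OF g] using B'(1,2) by simp_all
  qed
qed

lemma int_vector_if_Basis: "b \<in> (Basis :: (real^'n) set) \<Longrightarrow> int_vector b"
  and arc_vector_if_Basis: "b \<in> (Basis :: (real^'n) set) \<Longrightarrow> arc_vector b"
  by (auto simp: Basis_vec_def int_vector_axis arc_vector_axis)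

lemma transpose_mult_eq_sum_rows:
  fixes A :: "real^'n^'n"
  assumes "inj (\<lambda>i. A$i)" "B \<subseteq> range (\<lambda>i. A$i)"
  shows "transpose A *v (\<chi> i. if A$i \<in> B then u (A$i) else 0) = (\<Sum>v\<in>B. u v *\<^sub>R v)"
proof -
  have "transpose A *v (\<chi> i. if A$i \<in> B then u (A$i) else 0)
      = (\<Sum>i\<in>UNIV. (if A$i \<in> B then u (A$i) else 0) *\<^sub>R A$i)"
    by (simp add: matrix_mult_sum column_transpose row_def scalar_mult_eq_scaleR)
  also have "\<dots> = (\<Sum>v\<in>range (\<lambda>i. A$i). (if v \<in> B then u v else 0) *\<^sub>R v)"
    by (simp add: sum.reindex[OF assms(1)])
  also have "\<dots> = (\<Sum>v\<in>B. u v *\<^sub>R v)"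
    using assms(2) by (intro sum.mono_neutral_cong_right) auto
  finally show ?thesis .
qed

lemma int_multiple_in_int_span_of_arc_sums:
  fixes B :: "(real^'n) set" and w :: "real^'n"
  assumes indep: "independent B"
    and arc_sums: "\<And>v. v \<in> B \<Longrightarrow> \<exists>x y. arc_vector x \<and> arc_vector y \<and> v = x + y"
    and w: "w \<in> span B" "int_vector w"
  obtains D :: int and m :: "real^'n \<Rightarrow> int"
  where "D \<noteq> 0" "\<bar>D\<bar> \<le> 2 ^ card B" "of_int D *\<^sub>R w = (\<Sum>v\<in>B. of_int (m v) *\<^sub>R v)"
proof -
  obtain A :: "real^'n^'n" where A: "det A \<noteq> 0" "inj (\<lambda>i. A$i)"
    "B \<subseteq> range (\<lambda>i. A$i)" "range (\<lambda>i. A$i) \<subseteq> B \<union> Basis"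
    using independent_extends_to_rows_of_nonsingular_matrix[OF indep] by blast
  obtain u where u: "w = (\<Sum>v\<in>B. u v *\<^sub>R v)"
    using w(1) real_vector.span_finite[OF finiteI_independent[OF indep]] by auto
  define x :: "real^'n" where "x = (\<chi> i. if A$i \<in> B then u (A$i) else 0)"
  have Ax: "transpose A *v x = w"
    unfolding x_def u by (rule transpose_mult_eq_sum_rows[OF A(2,3)])
  have int_rows: "int_vector (A$i)" for i
  proof -
    have "A$i \<in> B \<or> A$i \<in> Basis" using A(4) by blast
    then show ?thesis
    proof
      assume "A$i \<in> B"
      then obtain y z where "arc_vector y" "arc_vector z" "A$i = y + z" using arc_sums by blast
      then show ?thesis by (simp add: int_vector_add int_vector_if_arc_vector)
    qed (rule int_vector_if_Basis)
  qed
  then have int_A: "A$i$j \<in> \<int>" for i j by (simp add: int_vector_def)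
  have Ints_coeff: "det A * u v \<in> \<int>" if "v \<in> B" for v
  proof -
    obtain k where "v = A$k" using A(3) \<open>v \<in> B\<close> by blast
    then have "x$k = u v" using \<open>v \<in> B\<close> by (simp add: x_def)
    moreover have "det (transpose A) * x$k \<in> \<int>"
      using int_A w(2) unfolding Ax[symmetric] int_vector_def
      by (intro Ints_det_mult_solution) (simp_all add: transpose_def)
    ultimately show ?thesis by simp
  qed
  define m where "m v = \<lfloor>det A * u v\<rfloor>" for v
  have m: "det A * u v = of_int (m v)" if "v \<in> B" for v
    using Ints_coeff[OF that] unfolding m_def by (metis Ints_cases floor_of_int)
  obtain D where D: "det A = of_int D"
    using Ints_det[OF int_A] by (rule Ints_cases)
  have "bij_betw (\<lambda>i. A$i) {i. A$i \<in> B} B"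
    unfolding bij_betw_def using inj_on_subset[OF A(2) subset_UNIV] A(3) by blast
  then have "card {i. A$i \<in> B} = card B" by (rule bij_betw_same_card)
  moreover have "\<bar>det A\<bar> \<le> 2 ^ card {i. A$i \<in> B}"
    using A(4) arc_sums arc_vector_if_Basis by (intro abs_det_le_2_pow_if_rows_sum_of_arcs) blast+
  ultimately have "of_int \<bar>D\<bar> \<le> (of_int (2 ^ card B) :: real)" using D by simp
  then have "\<bar>D\<bar> \<le> 2 ^ card B" by (simp only: of_int_le_iff)
  moreover have "D \<noteq> 0" using A(1) D by simp
  moreover have "of_int D *\<^sub>R w = (\<Sum>v\<in>B. of_int (m v) *\<^sub>R v)"
    unfolding u D[symmetric] by (simp add: scaleR_sum_right m)
  ultimately show ?thesis using that by blast
qed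

section \<open>Freiman homomorphisms into the reals\<close>

lemma notin_span_obtains_orthogonal:
  fixes w :: "'a::euclidean_space"
  assumes "w \<notin> span R"
  obtains z where "\<And>r. r \<in> R \<Longrightarrow> z \<bullet> r = 0" "z \<bullet> w \<noteq> 0"
proof -
  obtain y z where yz: "y \<in> span R" "\<And>v. v \<in> span R \<Longrightarrow> orthogonal z v" "w = y + z"
    using orthogonal_subspace_decomp_exists[of R w] by blast
  have "z \<noteq> 0" using yz(1,3) assms by auto
  moreover have "z \<bullet> y = 0" using yz(2)[OF yz(1)] by (simp add: orthogonal_def)
  ultimately have "z \<bullet> w \<noteq> 0" using yz(3) by (simp add: inner_add_right)
  moreover have "z \<bullet> r = 0" if "r \<in> R" for r
    using yz(2)[OF span_base[OF that]] by (simp add: orthogonal_def)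
  ultimately show ?thesis using that by blast
qed

lemma subspace_avoids_kernels:
  fixes W :: "'v::real_vector set" and F :: "('v \<Rightarrow> real) set"
  assumes "subspace W" "finite F" "\<And>f. f \<in> F \<Longrightarrow> linear f" "\<And>f. f \<in> F \<Longrightarrow> \<exists>x\<in>W. f x \<noteq> 0"
  shows "\<exists>x\<in>W. \<forall>f\<in>F. f x \<noteq> 0"
  using assms(2-4)
proof (induction F rule: finite_induct)
  case empty
  then show ?case using subspace_0[OF assms(1)] by blast
next
  case (insert f F)
  obtain x where x: "x \<in> W" "\<forall>g\<in>F. g x \<noteq> 0" using insert by blast
  obtain y where y: "y \<in> W" "f y \<noteq> 0" using insert.prems(2) by blast
  have "finite ((\<lambda>g. - g x / g y) ` insert f F)" using insert.hyps(1) by simp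
  then obtain t where t: "t \<notin> (\<lambda>g. - g x / g y) ` insert f F"
    using ex_new_if_finite[OF infinite_UNIV_char_0] by blast
  have "g (x + t *\<^sub>R y) \<noteq> 0" if g: "g \<in> insert f F" for g
  proof -
    have g_at: "g (x + t *\<^sub>R y) = g x + t * g y"
      using insert.prems(1)[OF g] by (simp add: linear_add linear_scale)
    show ?thesis
    proof (cases "g y = 0")
      case True
      then have "g \<in> F" using g y(2) by auto
      then show ?thesis using g_at True x(2) by simp
    next
      case False
      then have "t \<noteq> - g x / g y" using t g by blast
      then show ?thesis using g_at False by (auto simp: field_simps)
    qed
  qed
  moreover have "x + t *\<^sub>R y \<in> W"
    using assms(1) x(1) y(1) by (simp add: subspace_add subspace_scale)
  ultimately show ?case by blast
qed

definition freiman_hom_on :: "'a::plus set \<Rightarrow> ('a \<Rightarrow> 'b::plus) \<Rightarrow> bool" where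
  "freiman_hom_on S \<phi> \<longleftrightarrow>
     (\<forall>a\<in>S. \<forall>b\<in>S. \<forall>c\<in>S. \<forall>d\<in>S. a + b = c + d \<longrightarrow> \<phi> a + \<phi> b = \<phi> c + \<phi> d)"

lemma freiman_hom_on_maxima_unique:
  fixes \<phi> :: "'a::plus \<Rightarrow> 'b::linordered_ab_group_add"
  assumes "inj_on \<phi> S" "freiman_hom_on S \<phi>"
    and "x \<in> S" "y \<in> S" "x' \<in> S" "y' \<in> S" "\<phi> x \<le> \<phi> x'" "\<phi> y \<le> \<phi> y'" "x + y = x' + y'"
  shows "x = x' \<and> y = y'"
proof -
  have "\<phi> x + \<phi> y = \<phi> x' + \<phi> y'" using assms(2-6,9) unfolding freiman_hom_on_def by blast
  then have "\<phi> x = \<phi> x'" "\<phi> y = \<phi> y'"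
    using assms(7,8) add_less_le_mono add_le_less_mono by (metis order.order_iff_strict less_irrefl)+
  then show ?thesis using assms(1,3-6) by (simp add: inj_on_eq_iff)
qed

definition additive_relations :: "'a::{finite, ab_group_add} set \<Rightarrow> (real, 'a) vec set" where
  "additive_relations S = {axis a 1 + axis b 1 - axis c 1 - axis d 1 | a b c d.
     a \<in> S \<and> b \<in> S \<and> c \<in> S \<and> d \<in> S \<and> a + b = c + d}"

lemma additive_relation_sum_of_arcs:
  assumes "r \<in> additive_relations S"
  shows "\<exists>x y. arc_vector x \<and> arc_vector y \<and> r = x + y"
proof -
  obtain a b c d where "r = axis a 1 + axis b 1 - axis c 1 - axis d 1"
    using assms unfolding additive_relations_def by blast
  then have "r = (axis a 1 - axis c 1) + (axis b 1 - axis d 1)" by simp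
  then show ?thesis using arc_vector_axis_diff by blast
qed

lemma int_vector_additive_relation: "r \<in> additive_relations S \<Longrightarrow> int_vector r"
  using additive_relation_sum_of_arcs int_vector_add int_vector_if_arc_vector by metis

lemma weighted_sum_additive_relation:
  assumes "r \<in> additive_relations S"
  shows "weighted_sum r = 0"
proof -
  obtain a b c d where r: "r = axis a 1 + axis b 1 - axis c 1 - axis d 1" "a + b = c + d"
    using assms unfolding additive_relations_def by blast
  have "weighted_sum r = a + b - c - d"
    unfolding r(1)
    by (simp add: weighted_sum_add weighted_sum_diff weighted_sum_axis int_vector_add
        int_vector_diff int_vector_axis)
  then show ?thesis using r(2) by (simp add: algebra_simps)
qed

lemma dim_additive_relations_le: "dim (additive_relations S) \<le> card S - 1"
proof (cases "S = {}")
  case True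
  then show ?thesis by (simp add: additive_relations_def)
next
  case False
  then obtain a where "a \<in> S" by blast
  let ?T = "(\<lambda>x. axis x 1 - axis a (1::real)) ` (S - {a})"
  have T: "axis x 1 - axis a 1 \<in> span ?T" if "x \<in> S" for x
    using that by (cases "x = a") (simp_all add: span_zero span_base)
  have "additive_relations S \<subseteq> span ?T"
  proof
    fix r assume "r \<in> additive_relations S"
    then obtain b c d e where r: "r = axis b 1 + axis c 1 - axis d 1 - axis e 1"
      "b \<in> S" "c \<in> S" "d \<in> S" "e \<in> S"
      unfolding additive_relations_def by blast
    have "r = (axis b 1 - axis a 1) + (axis c 1 - axis a 1) - (axis d 1 - axis a 1) - (axis e 1 - axis a 1)"
      unfolding r(1) by (simp add: algebra_simps)
    also have "\<dots> \<in> span ?T"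
      using span_diff[OF span_diff[OF span_add[OF T[OF r(2)] T[OF r(3)]] T[OF r(4)]] T[OF r(5)]] .
    finally show "r \<in> span ?T" .
  qed
  then have "dim (additive_relations S) \<le> card ?T" by (rule dim_le_card) simp
  also have "\<dots> \<le> card (S - {a})" by (rule card_image_le) simp
  finally show ?thesis using \<open>a \<in> S\<close> by simp
qed

lemma freiman_hom_on_if_orthogonal_additive_relations:
  fixes z :: "(real, 'a::{finite, ab_group_add}) vec"
  assumes "\<And>r. r \<in> additive_relations S \<Longrightarrow> r \<bullet> z = 0"
  shows "freiman_hom_on S (\<lambda>x. z$x)"
  unfolding freiman_hom_on_def
proof (intro ballI impI)
  fix a b c d assume "a \<in> S" "b \<in> S" "c \<in> S" "d \<in> S" "a + b = c + d"
  then have "axis a 1 + axis b 1 - axis c 1 - axis d 1 \<in> additive_relations S"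
    unfolding additive_relations_def by blast
  then have "(axis a 1 + axis b 1 - axis c 1 - axis d 1) \<bullet> z = 0" by (rule assms)
  then show "z$a + z$b = z$c + z$d"
    by (simp add: inner_add_left inner_diff_left inner_axis')
qed

lemma axis_diff_notin_span_additive_relations:
  fixes S :: "'a::{finite, ab_group_add} set"
  assumes torsion_free: "\<And>n (x::'a). n \<noteq> 0 \<Longrightarrow> \<bar>n\<bar> < 2 ^ card S \<Longrightarrow> scaleZ n x = 0 \<Longrightarrow> x = 0"
    and "a \<in> S" "c \<in> S" "a \<noteq> c"
  shows "axis a 1 - axis c 1 \<notin> span (additive_relations S)"
proof
  let ?R = "additive_relations S" and ?w = "axis a 1 - axis c 1 :: (real, 'a) vec"
  assume "?w \<in> span ?R"
  obtain B where B: "B \<subseteq> ?R" "independent B" "?R \<subseteq> span B"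
    by (rule maximal_independent_subset)
  have "?w \<in> span B" using \<open>?w \<in> span ?R\<close> B(3) by (meson span_minimal subspace_span subsetD)
  moreover have "\<exists>x y. arc_vector x \<and> arc_vector y \<and> v = x + y" if "v \<in> B" for v
    using that B(1) additive_relation_sum_of_arcs by blast
  ultimately obtain D m where D: "D \<noteq> 0" "\<bar>D\<bar> \<le> 2 ^ card B"
    "of_int D *\<^sub>R ?w = (\<Sum>v\<in>B. of_int (m v) *\<^sub>R v)"
    using int_multiple_in_int_span_of_arc_sums[OF B(2)] int_vector_diff[OF int_vector_axis int_vector_axis]
    by blast
  have int_B: "int_vector v" and sum_B: "weighted_sum v = 0" if "v \<in> B" for v
    using that B(1) int_vector_additive_relation weighted_sum_additive_relation by blast+
  have "scaleZ D (a - c) = weighted_sum (of_int D *\<^sub>R ?w)"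
    by (simp add: weighted_sum_scaleR weighted_sum_diff weighted_sum_axis int_vector_diff int_vector_axis)
  also have "\<dots> = (\<Sum>v\<in>B. scaleZ (m v) (weighted_sum v))"
    unfolding D(3) using int_B by (simp add: weighted_sum_sum weighted_sum_scaleR int_vector_scaleR)
  also have "\<dots> = 0"
    by (simp add: sum_B)
  finally have "scaleZ D (a - c) = 0" .
  moreover have "card B < card S"
  proof -
    have "0 < card S" using \<open>a \<in> S\<close> by (auto simp: card_gt_0_iff)
    then show ?thesis
      using independent_card_le_dim[OF B(1,2)] dim_additive_relations_le[of S] by linarith
  qed
  then have "(2::int) ^ card B < 2 ^ card S" by simp
  then have "\<bar>D\<bar> < 2 ^ card S" using D(2) by linarith
  ultimately show False using torsion_free D(1) \<open>a \<noteq> c\<close> by fastforce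
qed

lemma exists_injective_real_freiman_hom:
  fixes S :: "'a::{finite, ab_group_add} set"
  assumes torsion_free: "\<And>n (x::'a). n \<noteq> 0 \<Longrightarrow> \<bar>n\<bar> < 2 ^ card S \<Longrightarrow> scaleZ n x = 0 \<Longrightarrow> x = 0"
  obtains \<phi> :: "'a \<Rightarrow> real" where "inj_on \<phi> S" "freiman_hom_on S \<phi>"
proof -
  let ?R = "additive_relations S"
  define W :: "(real, 'a) vec set" where "W = {z. \<forall>r\<in>?R. orthogonal r z}"
  define F :: "((real, 'a) vec \<Rightarrow> real) set"
    where "F = (\<lambda>(a, c) z. z$a - z$c) ` {(a, c). a \<in> S \<and> c \<in> S \<and> a \<noteq> c}"
  have F_cases: "\<exists>a c. a \<in> S \<and> c \<in> S \<and> a \<noteq> c \<and> f = (\<lambda>z. z$a - z$c)" if "f \<in> F" for f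
    using that unfolding F_def by auto
  have "subspace W" unfolding W_def by (rule subspace_orthogonal_to_vectors)
  moreover have "finite F" unfolding F_def by simp
  moreover have "linear f" if "f \<in> F" for f
    using F_cases[OF that] by (auto intro: linearI simp: algebra_simps)
  moreover have "\<exists>z\<in>W. f z \<noteq> 0" if f: "f \<in> F" for f
  proof -
    obtain a c where ac: "a \<in> S" "c \<in> S" "a \<noteq> c" "f = (\<lambda>z. z$a - z$c)"
      using F_cases[OF f] by blast
    have "axis a 1 - axis c 1 \<notin> span ?R"
      by (rule axis_diff_notin_span_additive_relations) (use torsion_free ac in blast)+
    then obtain z where "\<And>r. r \<in> ?R \<Longrightarrow> z \<bullet> r = 0" "z \<bullet> (axis a 1 - axis c 1) \<noteq> 0"
      by (rule notin_span_obtains_orthogonal) blast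
    then have "z \<in> W" "f z \<noteq> 0"
      unfolding W_def ac(4) by (simp_all add: orthogonal_def inner_commute inner_diff_right
          inner_axis)
    then show ?thesis by blast
  qed
  ultimately have "\<exists>z\<in>W. \<forall>f\<in>F. f z \<noteq> 0" by (rule subspace_avoids_kernels)
  then obtain z where z: "z \<in> W" "\<And>f. f \<in> F \<Longrightarrow> f z \<noteq> 0" by blast
  show ?thesis
  proof (rule that)
    show "inj_on (\<lambda>x. z$x) S"
    proof (rule inj_onI, rule ccontr)
      fix a c assume "a \<in> S" "c \<in> S" "z$a = z$c" "a \<noteq> c"
      then have "(\<lambda>z. z$a - z$c) \<in> F" unfolding F_def by (auto intro!: image_eqI[where x = "(a, c)"])
      from z(2)[OF this] show False using \<open>z$a = z$c\<close> by simp
    qed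
    show "freiman_hom_on S (\<lambda>x. z$x)"
      using z(1) unfolding W_def orthogonal_def
      by (intro freiman_hom_on_if_orthogonal_additive_relations) blast
  qed
qed

lemma prime_smallest_prime_factor: "1 < n \<Longrightarrow> prime (smallest_prime_factor n)"
  unfolding smallest_prime_factor_def using prime_factor_nat[of n]
  by (metis (mono_tags, lifting) LeastI_ex less_irrefl)

lemma two_pow_le_if_le_log:
  assumes "0 < p" "real k \<le> log 2 (real p)"
  shows "2 ^ k \<le> p"
proof -
  have "real (2 ^ k) \<le> real p" using assms by (simp add: le_log_iff powr_realpow)
  then show ?thesis by (simp only: of_nat_le_iff)
qed

lemma scaleZ_eq_0_imp_eq_0_if_card_le_log:
  fixes S :: "'a::{finite, ab_group_add} set" and x :: 'a
  assumes "1 < CARD('a)" "real (card S) \<le> log 2 (real (smallest_prime_factor CARD('a)))"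
    and "n \<noteq> 0" "\<bar>n\<bar> < 2 ^ card S" "scaleZ n x = 0"
  shows "x = 0"
proof (rule scaleZ_eq_0_imp_eq_0[OF assms(3) _ assms(5)])
  have "2 ^ card S \<le> smallest_prime_factor CARD('a)"
    using prime_gt_0_nat[OF prime_smallest_prime_factor[OF assms(1)]] assms(2)
    by (rule two_pow_le_if_le_log)
  then have "(2::int) ^ card S \<le> int (smallest_prime_factor CARD('a))"
    by (metis of_nat_le_iff of_nat_numeral of_nat_power)
  then show "\<bar>n\<bar> < int (smallest_prime_factor CARD('a))" using assms(4) by linarith
qed

theorem lemma5p5:
  fixes S :: "'a :: {finite, ab_group_add} set"
  assumes "card (UNIV :: 'a set) > 1"
    and "real (card S) \<le> log 2 (real (smallest_prime_factor (card (UNIV :: 'a set))))"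
  shows "\<exists>s :: 'a set \<Rightarrow> 'a.
           (\<forall>X. X \<subseteq> S \<and> X \<noteq> {} \<longrightarrow> s X \<in> X) \<and>
           (\<forall>X Y. X \<subseteq> S \<and> X \<noteq> {} \<and> Y \<subseteq> S \<and> Y \<noteq> {} \<longrightarrow>
              (\<forall>x\<in>X. \<forall>y\<in>Y. x + y = s X + s Y \<longrightarrow> x = s X \<and> y = s Y))"
proof -
  obtain \<phi> :: "'a \<Rightarrow> real" where \<phi>: "inj_on \<phi> S" "freiman_hom_on S \<phi>"
    using exists_injective_real_freiman_hom[of S] scaleZ_eq_0_imp_eq_0_if_card_le_log[OF assms]
    by blast
  define s where "s X = inv_into X \<phi> (Max (\<phi> ` X))" for X
  have s_in: "s X \<in> X" and s_max: "\<And>x. x \<in> X \<Longrightarrow> \<phi> x \<le> \<phi> (s X)" if "X \<noteq> {}" for X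
  proof -
    have "Max (\<phi> ` X) \<in> \<phi> ` X" using that by simp
    then show "s X \<in> X" "\<And>x. x \<in> X \<Longrightarrow> \<phi> x \<le> \<phi> (s X)"
      unfolding s_def by (simp_all add: inv_into_into f_inv_into_f)
  qed
  show ?thesis
  proof (intro exI[of _ s] conjI; intro allI impI ballI)
    show "s X \<in> X" if "X \<subseteq> S \<and> X \<noteq> {}" for X using that s_in by blast
  next
    fix X Y x y assume XY: "X \<subseteq> S \<and> X \<noteq> {} \<and> Y \<subseteq> S \<and> Y \<noteq> {}" and xy: "x \<in> X" "y \<in> Y"
      and xy_sum: "x + y = s X + s Y"
    have "x \<in> S" "y \<in> S" "s X \<in> S" "s Y \<in> S" using XY xy s_in by blast+
    moreover have "\<phi> x \<le> \<phi> (s X)" "\<phi> y \<le> \<phi> (s Y)" using XY xy s_max by blast+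
    ultimately show "x = s X \<and> y = s Y" using freiman_hom_on_maxima_unique[OF \<phi>] xy_sum by blast
  qed
qed

end
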